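(* Let $G$ be a symmetric game with a common type space $T$ and belief maps $f_i:T\to\Delta\big((\prod_{k\ne i}\Delta A_k)\times T^{n-1}\big)$ as described in the context, and suppose there is exactly one superrationally justifiable mixed strategy $\sigma$. If each player $i$ has a superrational type $t_i$ and uses a superrational bayesian mixed strategy $\alpha_i$, then the profile $(\alpha_1(t_1),\ldots,\alpha_n(t_n))$ equals $(\sigma,\ldots,\sigma)$, which is a superrational profile of mixed strategies.
   Context: A game $G=\langle I,\{A_i\},\{\pi_i\}\rangle$ has players $I=\{1,\ldots,n\}$, finite action sets $A_i$ and payoffs $\pi_i:\prod_i A_i\to\mathbb{R}$. It is symmetric if $A_i=A_j$ for all $i,j$ and $\pi_i(a_1,\ldots,a_n)=\pi_{\tau^{-1}(i)}(a_{\tau(1)},\ldots,a_{\tau(n)})$ for every permutation $\tau$ of $I$, every profile and every $i$. $\Delta A_i$ is the set of mixed strategies on $A_i$; for $\boldsymbol\sigma=(\sigma_1,\ldots,\sigma_n)$, $E\pi_i(\boldsymbol\sigma)=\sum_{(a_1,\ldots,a_n)}\pi_i(a_1,\ldots,a_n)\prod_k\sigma_k(a_k)$. A mixed strategy $\sigma^*$ is superrationally justifiable (and $(\sigma^*,\ldots,\sigma^* )$ a superrational profile of mixed strategies) if $E\pi_i(\sigma^*,\ldots,\sigma^* )\ge E\pi_i(\sigma,\ldots,\sigma)$ for every $i$ and every mixed strategy $\sigma$. For a measurable space $X$, $\Delta X$ denotes probability measures on $X$, $(\Delta f)(\mu)=\mu\circ f^{-1}$, and $\delta_x$ is the Dirac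 measure at $x$. All players draw types from the same measurable space $T$ (the paper takes a universal type space), with measurable maps $f_i:T\to\Delta\big((\prod_{k\ne i}\Delta A_k)\times T^{n-1}\big)$. For $j\ne i$ let $\gamma_j$ and $\rho'_j$ be the projections from $(\prod_{k\ne i}\Delta A_k)\times T^{n-1}$ onto $\Delta A_j$ and onto player $j$'s type coordinate. A type $t$ of player $i$ is superrational if $\Delta\rho'_j(f_i(t))=\delta_t$ for all $j\ne i$ and there is a superrationally justifiable mixed strategy $\sigma$ with $\Delta\gamma_j(f_i(t))=\delta_\sigma$ for all $j\ne i$. A superrational bayesian mixed strategy for player $i$ is a function $\alpha_i:T\to\Delta A_i$ such that for each superrational type $t$, if $\Delta\gamma_j(f_i(t))=\delta_\sigma$ then $\alpha_i(t)=\sigma$. *)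

theory Defs
  imports "HOL-Probability.Probability"
begin

text \<open>Players are the elements of a finite type 'i, the common action set is a finite
type 'a (symmetric game, so all A_i coincide), mixed strategies are 'a pmf,
a pure profile is a function 'i => 'a, and pi i a is the payoff of player i.\<close>

definition symmetric_game :: "('i \<Rightarrow> ('i \<Rightarrow> 'a) \<Rightarrow> real) \<Rightarrow> bool" where
  "symmetric_game \<pi> \<longleftrightarrow>
     (\<forall>\<tau> a i. bij \<tau> \<longrightarrow> \<pi> i a = \<pi> (inv \<tau> i) (a \<circ> \<tau>))"

definition exp_payoff ::
  "('i::finite \<Rightarrow> ('i \<Rightarrow> 'a::finite) \<Rightarrow> real) \<Rightarrow> 'i \<Rightarrow> ('i \<Rightarrow> 'a pmf) \<Rightarrow> real" where
  "exp_payoff \<pi> i s = (\<Sum>a\<in>UNIV. \<pi> i a * (\<Prod>k\<in>UNIV. pmf (s k) (a k)))"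

definition sr_justifiable ::
  "('i::finite \<Rightarrow> ('i \<Rightarrow> 'a::finite) \<Rightarrow> real) \<Rightarrow> 'a pmf \<Rightarrow> bool" where
  "sr_justifiable \<pi> \<sigma>\<^sub>0 \<longleftrightarrow>
     (\<forall>i \<sigma>. exp_payoff \<pi> i (\<lambda>_. \<sigma>\<^sub>0) \<ge> exp_payoff \<pi> i (\<lambda>_. \<sigma>))"

definition superrational_profile ::
  "('i::finite \<Rightarrow> ('i \<Rightarrow> 'a::finite) \<Rightarrow> real) \<Rightarrow> ('i \<Rightarrow> 'a pmf) \<Rightarrow> bool" where
  "superrational_profile \<pi> s \<longleftrightarrow> (\<exists>\<sigma>. s = (\<lambda>_. \<sigma>) \<and> sr_justifiable \<pi> \<sigma>)"

definition strat_space :: "'a pmf measure" where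
  "strat_space = count_space UNIV"

definition belief_space :: "'t measure \<Rightarrow> 'i \<Rightarrow> (('i \<Rightarrow> 'a pmf) \<times> ('i \<Rightarrow> 't)) measure" where
  "belief_space MT i =
     (PiM (UNIV - {i}) (\<lambda>_. strat_space)) \<Otimes>\<^sub>M (PiM (UNIV - {i}) (\<lambda>_. MT))"

definition superrational_type ::
  "('i::finite \<Rightarrow> ('i \<Rightarrow> 'a::finite) \<Rightarrow> real) \<Rightarrow> 't measure
    \<Rightarrow> ('i \<Rightarrow> 't \<Rightarrow> (('i \<Rightarrow> 'a pmf) \<times> ('i \<Rightarrow> 't)) measure) \<Rightarrow> 'i \<Rightarrow> 't \<Rightarrow> bool" where
  "superrational_type \<pi> MT f i t \<longleftrightarrow>
     (\<forall>j. j \<noteq> i \<longrightarrow> distr (f i t) MT (\<lambda>x. snd x j) = return MT t) \<and>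
     (\<exists>\<sigma>. sr_justifiable \<pi> \<sigma> \<and>
        (\<forall>j. j \<noteq> i \<longrightarrow> distr (f i t) strat_space (\<lambda>x. fst x j) = return strat_space \<sigma>))"

definition sr_bayesian ::
  "('i::finite \<Rightarrow> ('i \<Rightarrow> 'a::finite) \<Rightarrow> real) \<Rightarrow> 't measure
    \<Rightarrow> ('i \<Rightarrow> 't \<Rightarrow> (('i \<Rightarrow> 'a pmf) \<times> ('i \<Rightarrow> 't)) measure) \<Rightarrow> 'i \<Rightarrow> ('t \<Rightarrow> 'a pmf) \<Rightarrow> bool" where
  "sr_bayesian \<pi> MT f i \<alpha> \<longleftrightarrow>
     (\<forall>t\<in>space MT. superrational_type \<pi> MT f i t \<longrightarrow>
        (\<forall>j \<sigma>. j \<noteq> i \<longrightarrow> distr (f i t) strat_space (\<lambda>x. fst x j) = return strat_space \<sigma>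
               \<longrightarrow> \<alpha> t = \<sigma>))"

end

theory Submission
  imports Defs
begin

text \<open>A superrational type of player i is certain that every opponent plays one
superrationally justifiable strategy, and a superrational bayesian strategy makes i play
that same strategy. With a unique justifiable strategy, every player therefore plays it.
At least two players are needed so that player i has an opponent whose belief fixes
the strategy.\<close>

lemma ex_other_if_card_ge_2:
  fixes i :: "'i::finite"
  assumes "CARD('i) \<ge> 2"
  shows "\<exists>j. j \<noteq> i"
  using assms card_le_Suc0_iff_eq[of "UNIV :: 'i set"]
  by (metis finite numeral_2_eq_2 not_less_eq_eq)

lemma sr_bayesian_plays_justifiable:
  assumes "sr_bayesian \<pi> MT f i \<alpha>"
    and "t \<in> space MT" "superrational_type \<pi> MT f i t"
    and "\<exists>j. j \<noteq> i"
  shows "sr_justifiable \<pi> (\<alpha> t)"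
proof -
  obtain \<sigma> where \<sigma>: "sr_justifiable \<pi> \<sigma>"
    "\<forall>j. j \<noteq> i \<longrightarrow> distr (f i t) strat_space (\<lambda>x. fst x j) = return strat_space \<sigma>"
    using assms(3) unfolding superrational_type_def by blast
  obtain j where "j \<noteq> i" using assms(4) ..
  with assms(1,2,3) \<sigma>(2) have "\<alpha> t = \<sigma>"
    unfolding sr_bayesian_def by blast
  with \<sigma>(1) show ?thesis by simp
qed

theorem theorem2:
  fixes \<pi> :: "'i::finite \<Rightarrow> ('i \<Rightarrow> 'a::finite) \<Rightarrow> real"
    and MT :: "'t measure"
    and f :: "'i \<Rightarrow> 't \<Rightarrow> (('i \<Rightarrow> 'a pmf) \<times> ('i \<Rightarrow> 't)) measure"
    and \<alpha> :: "'i \<Rightarrow> 't \<Rightarrow> 'a pmf"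
    and t :: "'i \<Rightarrow> 't"
    and \<sigma> :: "'a pmf"
  assumes "CARD('i) \<ge> 2"
    and "symmetric_game \<pi>"
    and "\<forall>i. f i \<in> MT \<rightarrow>\<^sub>M prob_algebra (belief_space MT i)"
    and "sr_justifiable \<pi> \<sigma>"
    and "\<forall>\<sigma>'. sr_justifiable \<pi> \<sigma>' \<longrightarrow> \<sigma>' = \<sigma>"
    and "\<forall>i. t i \<in> space MT \<and> superrational_type \<pi> MT f i (t i)"
    and "\<forall>i. sr_bayesian \<pi> MT f i (\<alpha> i)"
  shows "(\<lambda>i. \<alpha> i (t i)) = (\<lambda>_. \<sigma>) \<and> superrational_profile \<pi> (\<lambda>i. \<alpha> i (t i))"
proof -
  have "sr_justifiable \<pi> (\<alpha> i (t i))" for i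
    using assms(6,7) sr_bayesian_plays_justifiable ex_other_if_card_ge_2[OF assms(1)] by metis
  with assms(5) have profile: "(\<lambda>i. \<alpha> i (t i)) = (\<lambda>_. \<sigma>)"
    by blast
  with assms(4) show ?thesis
    unfolding superrational_profile_def by blast
qed

end
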